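(* Let $\delta\in(0,1)$, let $H$ be an $n$-vertex graph, let $C$ be a set of colours with $|C|\ge7\delta n$, and for every vertex $w$ let $C_w\subseteq C$, such that: (i) $d_H(w)\le|C|-|C_w|$ for every $w\in V(H)$; (ii) there is a set $U\subseteq V(H)$ with $|U|\le\delta n$ such that every edge of $H$ has an endpoint in $U$; (iii) $|C_w|\le\delta n$ for every $w\in V(H)$; (iv) for every $c\in C$, $|\{w\in V(H): c\in C_w\}|\le\delta n$. Then there is a proper edge-colouring $\phi:E(H)\to C$ such that every edge $uv\in E(H)$ satisfies $\phi(uv)\notin C_u\cup C_v$.
   Context: A proper edge-colouring of a graph assigns colours to edges so that edges sharing an endpoint receive different colours; $d_H(w)$ is the degree of $w$ in $H$. *)

theory Defs
  imports Complex_Main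
begin

definition simple_graph :: "'a set \<Rightarrow> 'a set set \<Rightarrow> bool" where
  "simple_graph V E \<longleftrightarrow> finite V \<and> (\<forall>e\<in>E. e \<subseteq> V \<and> card e = 2)"

definition degree :: "'a set set \<Rightarrow> 'a \<Rightarrow> nat" where
  "degree E w = card {e\<in>E. w \<in> e}"

definition proper_edge_colouring :: "'a set set \<Rightarrow> 'c set \<Rightarrow> ('a set \<Rightarrow> 'c) \<Rightarrow> bool" where
  "proper_edge_colouring E C phi \<longleftrightarrow>
     (\<forall>e\<in>E. phi e \<in> C) \<and>
     (\<forall>e\<in>E. \<forall>f\<in>E. e \<noteq> f \<and> e \<inter> f \<noteq> {} \<longrightarrow> phi e \<noteq> phi f)"

end

theory Submission imports Defs begin

text \<open>Colour the edges inside the vertex cover U greedily, then the edges leaving U one at a time.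
  An edge inside U sees at most \<open>2\<delta>n\<close> forbidden and \<open>2\<delta>n\<close> used colours. For an edge uw with
  \<open>u \<in> U\<close>, \<open>w \<notin> U\<close> with no free colour, condition (i) gives a colour r missing at u; among the
  edges uy with \<open>y \<notin> U\<close> whose colour is still usable at w there are at least \<open>3\<delta>n\<close>, while at most
  \<open>2\<delta>n\<close> vertices y forbid r or see an r-coloured edge (the r-edges form a matching meeting U).
  Recolouring such an edge uy with r frees its old colour for uw.\<close>

lemma ex_not_in_of_card_less:
  assumes "finite B" "card B < card A"
  shows "\<exists>x\<in>A. x \<notin> B"
proof (rule ccontr)
  assume "\<not> (\<exists>x\<in>A. x \<notin> B)"
  then have "card A \<le> card B"
    using assms(1) by (intro card_mono) auto
  with assms(2) show False
    by simp
qed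

lemma card_star_le:
  assumes "finite U" "\<And>g. g \<in> S \<Longrightarrow> \<exists>y\<in>U. g = {x, y}"
  shows "card S \<le> card U"
proof -
  have "S \<subseteq> (\<lambda>y. {x, y}) ` U"
    using assms(2) by blast
  then have "card S \<le> card ((\<lambda>y. {x, y}) ` U)"
    using assms(1) by (intro card_mono) auto
  also have "\<dots> \<le> card U"
    using assms(1) by (rule card_image_le)
  finally show ?thesis .
qed

lemma card_disjoint_family_le:
  assumes "finite U" "pairwise disjnt S" "\<And>g. g \<in> S \<Longrightarrow> g \<inter> U \<noteq> {}"
  shows "card S \<le> card U"
proof -
  define pick where "pick g = (SOME x. x \<in> g \<inter> U)" for g
  have pick: "pick g \<in> g \<inter> U" if "g \<in> S" for g
  proof -
    have "\<exists>x. x \<in> g \<inter> U"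
      using assms(3)[OF that] by blast
    then show ?thesis
      unfolding pick_def by (rule someI_ex)
  qed
  have "inj_on pick S"
  proof (rule inj_onI)
    fix g h assume g: "g \<in> S" and h: "h \<in> S" and eq: "pick g = pick h"
    have "\<not> disjnt g h"
      using pick[OF g] pick[OF h] eq unfolding disjnt_def by auto
    then show "g = h"
      using pairwiseD[OF assms(2) g h] by blast
  qed
  moreover have "pick ` S \<subseteq> U"
    using pick by auto
  ultimately show ?thesis
    using assms(1) card_inj_on_le by blast
qed

lemma card_Union_diff_le:
  assumes "finite S" "\<And>g. g \<in> S \<Longrightarrow> card (g - U) \<le> 1"
  shows "card (\<Union>S - U) \<le> card S"
proof -
  have "card (\<Union>S - U) = card (\<Union>g\<in>S. g - U)"
    by (rule arg_cong[where f = card]) blast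
  also have "\<dots> \<le> (\<Sum>g\<in>S. card (g - U))"
    by (rule card_UN_le[OF assms(1)])
  also have "\<dots> \<le> card S"
    using sum_mono[of S "\<lambda>g. card (g - U)" "\<lambda>_. 1"] assms(2) by simp
  finally show ?thesis .
qed

definition admissible_colouring ::
    "'c set \<Rightarrow> ('a \<Rightarrow> 'c set) \<Rightarrow> 'a set set \<Rightarrow> ('a set \<Rightarrow> 'c) \<Rightarrow> bool" where
  "admissible_colouring C Cw S phi \<longleftrightarrow>
     proper_edge_colouring S C phi \<and> (\<forall>e\<in>S. \<forall>x\<in>e. phi e \<notin> Cw x)"

lemma admissible_colouring_empty: "admissible_colouring C Cw {} phi"
  by (simp add: admissible_colouring_def proper_edge_colouring_def)

lemma admissible_colouringD:
  assumes "admissible_colouring C Cw S phi" "g \<in> S"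
  shows "phi g \<in> C" "x \<in> g \<Longrightarrow> phi g \<notin> Cw x"
    and "h \<in> S \<Longrightarrow> g \<noteq> h \<Longrightarrow> x \<in> g \<Longrightarrow> x \<in> h \<Longrightarrow> phi g \<noteq> phi h"
  using assms unfolding admissible_colouring_def proper_edge_colouring_def by blast+

lemma admissible_colouring_insert:
  assumes adm: "admissible_colouring C Cw S phi" and e: "e = {u, v}" and c: "c \<in> C"
    and free: "c \<notin> Cw u \<union> Cw v \<union> phi ` {g\<in>S. u \<in> g} \<union> phi ` {g\<in>S. v \<in> g}"
  shows "admissible_colouring C Cw (insert e S) (phi(e := c))"
proof -
  let ?psi = "phi(e := c)"
  have fresh: "phi g \<noteq> c" if "g \<in> S" "g \<inter> e \<noteq> {} \<or> e \<inter> g \<noteq> {}" for g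
    using free that unfolding e by auto
  have "?psi g \<in> C \<and> (\<forall>x\<in>g. ?psi g \<notin> Cw x)" if "g \<in> insert e S" for g
    using admissible_colouringD[OF adm] c free that unfolding e by auto
  moreover have "?psi g \<noteq> ?psi h"
    if "g \<in> insert e S" "h \<in> insert e S" "g \<noteq> h" "g \<inter> h \<noteq> {}" for g h
  proof (cases "g = e \<or> h = e")
    case True
    then show ?thesis
      using that fresh[of g] fresh[of h] by auto
  next
    case False
    then show ?thesis
      using admissible_colouringD(3)[OF adm] that by auto
  qed
  ultimately show ?thesis
    unfolding admissible_colouring_def proper_edge_colouring_def by simp
qed

lemma admissible_colouring_swap:
  assumes adm: "admissible_colouring C Cw S phi"
    and e: "e = {u, w}" and f: "f = {u, y}" "f \<in> S"
    and r: "r \<in> C" "r \<notin> Cw u \<union> Cw y \<union> phi ` {g\<in>S. u \<in> g} \<union> phi ` {g\<in>S. y \<in> g}"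
    and free_at_w: "phi f \<notin> Cw w \<union> phi ` {g\<in>S. w \<in> g}"
  shows "admissible_colouring C Cw (insert e S) (phi(f := r, e := phi f))"
proof -
  define psi where "psi = phi(f := r)"
  have adm': "admissible_colouring C Cw S psi"
    using admissible_colouring_insert[OF adm f(1) r] f(2) by (simp add: psi_def insert_absorb)
  have u: "u \<in> f"
    using f(1) by simp
  have psi_ne: "psi g \<noteq> phi f" if "g \<in> S" "u \<in> g \<or> w \<in> g" for g
  proof (cases "g = f")
    case True
    then show ?thesis
      using r(2) f(2) u by (auto simp: psi_def)
  next
    case False
    have "phi g \<noteq> phi f"
      using that(2)
    proof
      assume "u \<in> g"
      then show ?thesis
        using admissible_colouringD(3)[OF adm that(1) f(2) False _ u] by blast
    next
      assume "w \<in> g"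
      then have "phi g \<in> phi ` {g\<in>S. w \<in> g}"
        using that(1) by blast
      then show ?thesis
        using free_at_w by (metis UnI2)
    qed
    then show ?thesis
      using False by (simp add: psi_def)
  qed
  have old: "phi f \<in> C" "phi f \<notin> Cw u"
    using admissible_colouringD[OF adm f(2)] u by auto
  moreover have "phi f \<notin> psi ` {g\<in>S. x \<in> g}" if "x = u \<or> x = w" for x
  proof
    assume "phi f \<in> psi ` {g\<in>S. x \<in> g}"
    then obtain g where "g \<in> {g\<in>S. x \<in> g}" "phi f = psi g"
      by (rule imageE)
    with psi_ne[of g] that show False
      by auto
  qed
  ultimately have "phi f \<notin> Cw u \<union> Cw w \<union> psi ` {g\<in>S. u \<in> g} \<union> psi ` {g\<in>S. w \<in> g}"
    using free_at_w by simp
  from admissible_colouring_insert[OF adm' e old(1) this] show ?thesis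
    unfolding psi_def .
qed

locale cover_colouring =
  fixes V :: "'a set" and E :: "'a set set" and C :: "'c set" and Cw :: "'a \<Rightarrow> 'c set"
    and U :: "'a set" and D :: real
  assumes graph: "simple_graph V E"
    and finite_C: "finite C"
    and Cw_subset: "\<And>w. w \<in> V \<Longrightarrow> Cw w \<subseteq> C"
    and degree_bound: "\<And>w. w \<in> V \<Longrightarrow> degree E w \<le> card C - card (Cw w)"
    and U_subset: "U \<subseteq> V"
    and card_U: "real (card U) \<le> D"
    and cover: "\<And>e. e \<in> E \<Longrightarrow> e \<inter> U \<noteq> {}"
    and many_colours: "7 * D \<le> real (card C)"
    and card_Cw: "\<And>w. w \<in> V \<Longrightarrow> real (card (Cw w)) \<le> D"
    and card_owners: "\<And>c. c \<in> C \<Longrightarrow> real (card {w\<in>V. c \<in> Cw w}) \<le> D"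
begin

lemma finite_V: "finite V"
  using graph by (simp add: simple_graph_def)

lemma finite_U: "finite U"
  using finite_V U_subset by (rule finite_subset[rotated])

lemma finite_E: "finite E"
  using graph finite_V by (auto simp: simple_graph_def intro: finite_subset[of E "Pow V"])

lemma finite_edges:
  assumes "G \<subseteq> E"
  shows "finite G"
  using assms finite_E by (rule finite_subset)

lemma finite_Cw: "w \<in> V \<Longrightarrow> finite (Cw w)"
  using Cw_subset finite_C finite_subset by blast

lemma edge_subset: "e \<in> E \<Longrightarrow> e \<subseteq> V"
  using graph by (simp add: simple_graph_def)

lemma edge_other_end:
  assumes "e \<in> E" "x \<in> e"
  obtains y where "y \<noteq> x" "e = {x, y}"
  using assms graph by (fastforce simp: simple_graph_def card_2_iff)

lemma edge_at_outside:
  assumes "e \<in> E" "x \<in> e" "x \<notin> U"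
  shows "\<exists>y\<in>U. e = {x, y}"
  using assms cover by (metis edge_other_end Int_emptyI insertE singletonD)

lemma card_edge_diff_le: "e \<in> E \<Longrightarrow> card (e - U) \<le> 1"
proof -
  assume e: "e \<in> E"
  then obtain x where x: "x \<in> e" "x \<in> U"
    using cover by blast
  with e obtain y where "e = {x, y}"
    by (metis edge_other_end)
  with x(2) have "e - U \<subseteq> {y}"
    by blast
  then show "card (e - U) \<le> 1"
    using card_mono[of "{y}" "e - U"] by simp
qed

lemma bound_pos: "x \<in> U \<Longrightarrow> 0 < D"
  using card_U finite_U card_gt_0_iff[of U] by fastforce

lemma card_inside_edges_at_le:
  assumes "G \<subseteq> E"
  shows "card {g\<in>G. x \<in> g \<and> g \<subseteq> U} \<le> card U"
  using finite_U
proof (rule card_star_le)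
  fix g assume g: "g \<in> {g\<in>G. x \<in> g \<and> g \<subseteq> U}"
  then obtain y where "g = {x, y}"
    using assms by (metis (no_types, lifting) edge_other_end mem_Collect_eq subsetD)
  with g show "\<exists>y\<in>U. g = {x, y}"
    by blast
qed

lemma card_edges_at_outside_le:
  assumes "G \<subseteq> E" "x \<notin> U"
  shows "card {g\<in>G. x \<in> g} \<le> card U"
  using finite_U
proof (rule card_star_le)
  fix g assume "g \<in> {g\<in>G. x \<in> g}"
  then show "\<exists>y\<in>U. g = {x, y}"
    using assms edge_at_outside by blast
qed

lemma card_colour_class_outside_le:
  assumes G: "G \<subseteq> E" "admissible_colouring C Cw G phi"
  shows "card (\<Union>{g\<in>G. phi g = r} - U) \<le> card U"
proof -
  have "card (\<Union>{g\<in>G. phi g = r} - U) \<le> card {g\<in>G. phi g = r}"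
    using finite_edges[OF G(1)] G(1) card_edge_diff_le by (intro card_Union_diff_le) auto
  also have "\<dots> \<le> card U"
  proof (rule card_disjoint_family_le[OF finite_U])
    show "pairwise disjnt {g\<in>G. phi g = r}"
      unfolding pairwise_def disjnt_def using admissible_colouringD(3)[OF G(2)] by blast
    show "\<And>g. g \<in> {g\<in>G. phi g = r} \<Longrightarrow> g \<inter> U \<noteq> {}"
      using G(1) cover by blast
  qed
  finally show ?thesis .
qed

lemma missing_colour:
  assumes G: "G \<subseteq> E" "e \<in> E - G" "u \<in> e"
  shows "\<exists>r\<in>C. r \<notin> Cw u \<union> phi ` {g\<in>G. u \<in> g}"
proof (rule ex_not_in_of_card_less)
  have u: "u \<in> V"
    using G edge_subset by blast
  show "finite (Cw u \<union> phi ` {g\<in>G. u \<in> g})"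
    using finite_Cw[OF u] G(1) finite_E by (auto intro: finite_subset)
  have "{g\<in>G. u \<in> g} \<subset> {g\<in>E. u \<in> g}"
    using G by blast
  then have "card {g\<in>G. u \<in> g} < degree E u"
    unfolding degree_def using finite_E by (intro psubset_card_mono) auto
  moreover have "degree E u + card (Cw u) \<le> card C"
    using degree_bound[OF u] card_mono[OF finite_C Cw_subset[OF u]] by linarith
  moreover have "card (phi ` {g\<in>G. u \<in> g}) \<le> card {g\<in>G. u \<in> g}"
    using G(1) finite_E by (intro card_image_le) (auto intro: finite_subset)
  moreover have "card (Cw u \<union> phi ` {g\<in>G. u \<in> g}) \<le> card (Cw u) + card (phi ` {g\<in>G. u \<in> g})"
    by (rule card_Un_le)
  ultimately show "card (Cw u \<union> phi ` {g\<in>G. u \<in> g}) < card C"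
    by linarith
qed

lemma extend_inside:
  assumes F: "F \<subseteq> {g\<in>E. g \<subseteq> U}" "admissible_colouring C Cw F phi"
    and e: "e \<in> E" "e \<subseteq> U"
  shows "\<exists>phi'. admissible_colouring C Cw (insert e F) phi'"
proof -
  have "card e = 2"
    using e(1) graph by (simp add: simple_graph_def)
  then obtain u v where uv: "e = {u, v}"
    unfolding card_2_iff by blast
  have U: "u \<in> U" "v \<in> U"
    using uv e(2) by auto
  then have V: "u \<in> V" "v \<in> V"
    using U_subset by auto
  have F_E: "F \<subseteq> E"
    using F(1) by blast
  have finite_F: "finite F"
    using finite_edges[OF F_E] .
  have used: "card (phi ` {g\<in>F. x \<in> g}) \<le> card U" for x
  proof -
    have "{g\<in>F. x \<in> g} = {g\<in>F. x \<in> g \<and> g \<subseteq> U}"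
      using F(1) by blast
    then have "card {g\<in>F. x \<in> g} \<le> card U"
      using card_inside_edges_at_le[OF F_E, of x] by simp
    then show ?thesis
      using finite_F card_image_le[of "{g\<in>F. x \<in> g}" phi] by simp
  qed
  let ?A = "Cw u \<union> Cw v \<union> phi ` {g\<in>F. u \<in> g} \<union> phi ` {g\<in>F. v \<in> g}"
  have "card ?A \<le> card (Cw u) + card (Cw v) + card (phi ` {g\<in>F. u \<in> g}) + card (phi ` {g\<in>F. v \<in> g})"
    using card_Un_le[of "Cw u" "Cw v"] card_Un_le[of "Cw u \<union> Cw v" "phi ` {g\<in>F. u \<in> g}"]
      card_Un_le[of "Cw u \<union> Cw v \<union> phi ` {g\<in>F. u \<in> g}" "phi ` {g\<in>F. v \<in> g}"] by linarith
  then have "real (card ?A) \<le> 4 * D"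
    using used[of u] used[of v] card_Cw[OF V(1)] card_Cw[OF V(2)] card_U by linarith
  also have "\<dots> < real (card C)"
    using many_colours bound_pos[OF U(1)] by linarith
  finally have "card ?A < card C"
    by simp
  moreover have "finite ?A"
    using finite_Cw[OF V(1)] finite_Cw[OF V(2)] finite_F by simp
  ultimately obtain c where "c \<in> C" "c \<notin> ?A"
    by (meson ex_not_in_of_card_less)
  from admissible_colouring_insert[OF F(2) uv this] show ?thesis
    by blast
qed

lemma blocked_colours_cover:
  assumes G: "G \<subseteq> E" and u: "u \<in> U"
    and blocked: "C \<subseteq> Cw u \<union> X \<union> phi ` {g\<in>G. u \<in> g}"
  shows "C \<subseteq> Cw u \<union> X \<union> phi ` {g\<in>G. u \<in> g \<and> g \<subseteq> U}
    \<union> (\<lambda>y. phi {u, y}) ` {y\<in>V - U. {u, y} \<in> G \<and> phi {u, y} \<notin> X}"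
proof
  fix c assume "c \<in> C"
  then consider "c \<in> Cw u \<union> X" | g where "g \<in> G" "u \<in> g" "c = phi g"
    using blocked by blast
  then show "c \<in> Cw u \<union> X \<union> phi ` {g\<in>G. u \<in> g \<and> g \<subseteq> U}
    \<union> (\<lambda>y. phi {u, y}) ` {y\<in>V - U. {u, y} \<in> G \<and> phi {u, y} \<notin> X}"
  proof cases
    case 1
    then show ?thesis
      by blast
  next
    case (2 g)
    then obtain y where g: "g = {u, y}"
      using G by (metis edge_other_end subsetD)
    have "y \<in> V"
      using 2(1) G edge_subset g by blast
    then consider "y \<in> U" | "phi g \<in> X" | "y \<in> V - U" "phi g \<notin> X"
      by blast
    then show ?thesis
      using 2 g u by cases blast+
  qed
qed

lemma card_swap_candidates:
  assumes G: "G \<subseteq> E" and u: "u \<in> U" and w: "w \<in> V" "w \<notin> U"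
    and blocked: "C \<subseteq> Cw u \<union> Cw w \<union> phi ` {g\<in>G. u \<in> g} \<union> phi ` {g\<in>G. w \<in> g}"
  shows "real (card C)
    \<le> 4 * D + real (card {y\<in>V - U. {u, y} \<in> G \<and> phi {u, y} \<notin> Cw w \<union> phi ` {g\<in>G. w \<in> g}})"
proof -
  define X where "X = Cw w \<union> phi ` {g\<in>G. w \<in> g}"
  define N where "N = {y\<in>V - U. {u, y} \<in> G \<and> phi {u, y} \<notin> X}"
  define I where "I = {g\<in>G. u \<in> g \<and> g \<subseteq> U}"
  have finite_G: "finite G"
    using finite_edges[OF G] .
  have u_V: "u \<in> V"
    using u U_subset by blast
  have card_X: "card X \<le> card (Cw w) + card U"
    using card_Un_le[of "Cw w" "phi ` {g\<in>G. w \<in> g}"] card_image_le[of "{g\<in>G. w \<in> g}" phi]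
      card_edges_at_outside_le[OF G w(2)] finite_G unfolding X_def by simp
  have "C \<subseteq> Cw u \<union> X \<union> phi ` {g\<in>G. u \<in> g}"
    using blocked unfolding X_def by blast
  from blocked_colours_cover[OF G u this]
  have "C \<subseteq> Cw u \<union> X \<union> phi ` I \<union> (\<lambda>y. phi {u, y}) ` N"
    unfolding N_def I_def .
  then have "card C \<le> card (Cw u \<union> X \<union> phi ` I \<union> (\<lambda>y. phi {u, y}) ` N)"
    using finite_Cw[OF u_V] finite_Cw[OF w(1)] finite_G finite_V unfolding N_def X_def I_def
    by (intro card_mono) auto
  also have "\<dots> \<le> card (Cw u) + card X + card I + card N"
    using card_Un_le[of "Cw u" X] card_Un_le[of "Cw u \<union> X" "phi ` I"]
      card_Un_le[of "Cw u \<union> X \<union> phi ` I" "(\<lambda>y. phi {u, y}) ` N"]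
      card_image_le[of I phi] card_image_le[of N "\<lambda>y. phi {u, y}"]
      finite_G finite_V unfolding N_def I_def by simp
  finally show ?thesis
    using card_X card_inside_edges_at_le[OF G, of u] card_Cw[OF u_V] card_Cw[OF w(1)] card_U
    unfolding N_def X_def I_def by linarith
qed

lemma exists_swap_partner:
  assumes G: "G \<subseteq> E" "admissible_colouring C Cw G phi"
    and u: "u \<in> U" and w: "w \<in> V" "w \<notin> U" and r: "r \<in> C"
    and blocked: "C \<subseteq> Cw u \<union> Cw w \<union> phi ` {g\<in>G. u \<in> g} \<union> phi ` {g\<in>G. w \<in> g}"
  obtains y where "{u, y} \<in> G" "y \<notin> U" "phi {u, y} \<notin> Cw w \<union> phi ` {g\<in>G. w \<in> g}"
    "r \<notin> Cw y \<union> phi ` {g\<in>G. y \<in> g}"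
proof -
  define N where "N = {y\<in>V - U. {u, y} \<in> G \<and> phi {u, y} \<notin> Cw w \<union> phi ` {g\<in>G. w \<in> g}}"
  define Y where "Y = {y\<in>V. r \<in> Cw y} \<union> (\<Union>{g\<in>G. phi g = r} - U)"
  have "card Y \<le> card {y\<in>V. r \<in> Cw y} + card U"
    using card_Un_le[of "{y\<in>V. r \<in> Cw y}" "\<Union>{g\<in>G. phi g = r} - U"]
      card_colour_class_outside_le[OF G, of r] unfolding Y_def by linarith
  then have "real (card Y) < real (card N)"
    using card_swap_candidates[OF G(1) u w blocked] card_owners[OF r] card_U many_colours
      bound_pos[OF u] unfolding N_def by linarith
  moreover have "finite Y"
  proof (rule finite_subset[OF _ finite_V])
    show "Y \<subseteq> V"
      unfolding Y_def using G(1) edge_subset by blast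
  qed
  ultimately obtain y where y: "y \<in> N" "y \<notin> Y"
    by (meson ex_not_in_of_card_less of_nat_less_iff)
  show thesis
  proof (rule that)
    show "{u, y} \<in> G" "y \<notin> U" "phi {u, y} \<notin> Cw w \<union> phi ` {g\<in>G. w \<in> g}"
      using y(1) unfolding N_def by auto
    have "r \<notin> phi ` {g\<in>G. y \<in> g}"
      using y \<open>y \<notin> U\<close> unfolding Y_def by blast
    moreover have "r \<notin> Cw y"
      using y unfolding Y_def N_def by blast
    ultimately show "r \<notin> Cw y \<union> phi ` {g\<in>G. y \<in> g}"
      by blast
  qed
qed

lemma extend_crossing:
  assumes G: "G \<subseteq> E" "admissible_colouring C Cw G phi"
    and e: "e \<in> E - G" "\<not> e \<subseteq> U"
  shows "\<exists>phi'. admissible_colouring C Cw (insert e G) phi'"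
proof -
  obtain u where u: "u \<in> e" "u \<in> U"
    using cover e(1) by blast
  then obtain w where uw: "e = {u, w}"
    using e(1) by (metis DiffD1 edge_other_end)
  have w: "w \<in> V" "w \<notin> U"
    using e uw u(2) edge_subset by auto
  let ?A = "Cw u \<union> Cw w \<union> phi ` {g\<in>G. u \<in> g} \<union> phi ` {g\<in>G. w \<in> g}"
  show ?thesis
  proof (cases "C \<subseteq> ?A")
    case False
    then obtain c where "c \<in> C" "c \<notin> ?A"
      by blast
    from admissible_colouring_insert[OF G(2) uw this] show ?thesis
      by blast
  next
    case True
    obtain r where r: "r \<in> C" "r \<notin> Cw u \<union> phi ` {g\<in>G. u \<in> g}"
      using missing_colour[OF G(1) e(1) u(1)] by blast
    obtain y where y: "{u, y} \<in> G" "y \<notin> U" "phi {u, y} \<notin> Cw w \<union> phi ` {g\<in>G. w \<in> g}"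
      "r \<notin> Cw y \<union> phi ` {g\<in>G. y \<in> g}"
      by (rule exists_swap_partner[OF G u(2) w r(1) True])
    have "r \<notin> Cw u \<union> Cw y \<union> phi ` {g\<in>G. u \<in> g} \<union> phi ` {g\<in>G. y \<in> g}"
      using r(2) y(4) by simp
    from admissible_colouring_swap[OF G(2) uw refl y(1) r(1) this y(3)] show ?thesis
      by blast
  qed
qed

lemma admissible_colouring_exists: "\<exists>phi. admissible_colouring C Cw E phi"
proof -
  define E1 where "E1 = {g\<in>E. g \<subseteq> U}"
  have inside: "\<exists>phi. admissible_colouring C Cw F phi" if "F \<subseteq> E1" for F
  proof -
    have "F \<subseteq> E"
      using that unfolding E1_def by blast
    then have "finite F"
      using finite_E by (rule finite_subset)
    then show ?thesis
      using that
    proof (induction F rule: finite_induct)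
      case empty
      show ?case
        using admissible_colouring_empty by blast
    next
      case (insert e F)
      then obtain phi where phi: "admissible_colouring C Cw F phi"
        by blast
      have "F \<subseteq> {g\<in>E. g \<subseteq> U}" "e \<in> E" "e \<subseteq> U"
        using insert.prems unfolding E1_def by auto
      from extend_inside[OF this(1) phi this(2,3)] show ?case .
    qed
  qed
  have crossing: "\<exists>phi. admissible_colouring C Cw (E1 \<union> F) phi" if "F \<subseteq> E - E1" for F
  proof -
    have "F \<subseteq> E"
      using that by blast
    then have "finite F"
      using finite_E by (rule finite_subset)
    then show ?thesis
      using that
    proof (induction F rule: finite_induct)
      case empty
      show ?case
        using inside by simp
    next
      case (insert e F)
      then obtain phi where phi: "admissible_colouring C Cw (E1 \<union> F) phi"
        by blast
      have "E1 \<union> F \<subseteq> E" "e \<in> E - (E1 \<union> F)" "\<not> e \<subseteq> U"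
        using insert unfolding E1_def by auto
      from extend_crossing[OF this(1) phi this(2,3)] show ?case
        by simp
    qed
  qed
  have "E1 \<union> (E - E1) = E"
    unfolding E1_def by blast
  with crossing[of "E - E1"] show ?thesis
    by simp
qed

end

theorem lemma9:
  fixes V :: "'a set" and E :: "'a set set" and C :: "'c set"
    and Cw :: "'a \<Rightarrow> 'c set" and \<delta> :: real and n :: nat
  assumes graph: "simple_graph V E"
    and n_def: "card V = n"
    and delta: "0 < \<delta>" "\<delta> < 1"
    and finC: "finite C"
    and sizeC: "real (card C) \<ge> 7 * \<delta> * real n"
    and subC: "\<forall>w\<in>V. Cw w \<subseteq> C"
    and i: "\<forall>w\<in>V. degree E w \<le> card C - card (Cw w)"
    and ii: "\<exists>U\<subseteq>V. real (card U) \<le> \<delta> * real n \<and> (\<forall>e\<in>E. e \<inter> U \<noteq> {})"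
    and iii: "\<forall>w\<in>V. real (card (Cw w)) \<le> \<delta> * real n"
    and iv: "\<forall>c\<in>C. real (card {w\<in>V. c \<in> Cw w}) \<le> \<delta> * real n"
  shows "\<exists>phi. proper_edge_colouring E C phi \<and>
           (\<forall>u\<in>V. \<forall>v\<in>V. {u, v} \<in> E \<longrightarrow> phi {u, v} \<notin> Cw u \<union> Cw v)"
proof -
  obtain U where U: "U \<subseteq> V" "real (card U) \<le> \<delta> * real n" "\<forall>e\<in>E. e \<inter> U \<noteq> {}"
    using ii by blast
  interpret cover_colouring V E C Cw U "\<delta> * real n"
  proof
    show "7 * (\<delta> * real n) \<le> real (card C)"
      using sizeC by (simp add: mult.assoc)
  qed (use graph finC subC i U iii iv in auto)
  obtain phi where "admissible_colouring C Cw E phi"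
    using admissible_colouring_exists by blast
  then show ?thesis
    unfolding admissible_colouring_def by blast
qed

end
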